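(* Let $l:\mathbb{R}\times\mathbb{R}\to\mathbb{R}$ be doubly convex (jointly convex), let $Z=(z_1,\dots,z_n)$ be any sample and $f:\mathbb{X}\to\mathbb{R}$ any model. Then for all integers $1\le k\le k'\le n$, the empirical $k$-risks satisfy $r_k(f,Z)\ge r_{k'}(f,Z)$. In particular this holds for the Kullback–Leibler loss $\mathrm{kl}(\hat y,y)=y\log\frac{y}{\hat y}+(1-y)\log\frac{1-y}{1-\hat y}$ on $(0,1)\times[0,1]$ (with $0\log 0=0$) when $f$ takes values in $(0,1)$ and labels lie in $[0,1]$.
   Context: For a finite family $S$ and function $g$, $\hat{E}_S[g(z)]=\frac{1}{|S|}\sum_{z\in S}g(z)$. For a model $f$, loss $l(\hat y,y)$ and sample $Z=(z_1,\dots,z_n)$ with $z_i=(x_i,y_i)$, the empirical $k$-risk is $r_k(f,Z)=\binom{n}{k}^{-1}\sum_{I}l(\hat{E}_{S_I}[f(x)],\hat{E}_{S_I}[y])$, summing over all $k$-element index sets $I\subset\{1,\dots,n\}$ with $S_I=(z_i)_{i\in I}$. Doubly convex means jointly convex in both arguments. *)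

theory Defs
  imports "HOL-Analysis.Analysis"
begin

definition emp_mean :: "nat set \<Rightarrow> (nat \<Rightarrow> real) \<Rightarrow> real" where
  "emp_mean S g = (\<Sum>i\<in>S. g i) / real (card S)"

definition k_risk :: "(real \<Rightarrow> real \<Rightarrow> real) \<Rightarrow> ('x \<Rightarrow> real) \<Rightarrow> nat \<Rightarrow> (nat \<Rightarrow> 'x \<times> real) \<Rightarrow> nat \<Rightarrow> real" where
  "k_risk l f n Z k =
     (\<Sum>I\<in>{I. I \<subseteq> {..<n} \<and> card I = k}.
        l (emp_mean I (\<lambda>i. f (fst (Z i)))) (emp_mean I (\<lambda>i. snd (Z i)))) / real (n choose k)"

definition kl :: "real \<Rightarrow> real \<Rightarrow> real" where
  "kl yh y = (if y = 0 then 0 else y * ln (y / yh))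
           + (if y = 1 then 0 else (1 - y) * ln ((1 - y) / (1 - yh)))"

end

theory Submission
  imports Defs
begin

text \<open>Every (k+1)-subset J of the sample is the average of its k leave-one-out subsets, both in
  the mean of the predictions and in the mean of the labels, so by Jensen's inequality the loss on J
  is at most the average loss on those k-subsets. Averaging over all J and counting, each k-subset
  arises from exactly n - k of the J's, turns this into r_{k+1} \<le> r_k. Joint convexity of the
  Kullback-Leibler loss on (0,1) \<times> [0,1] follows from that of a log(a/b), the perspective of
  x log x, which lies above each of its tangent planes a log c + a - b c.\<close>

definition k_subsets :: "nat \<Rightarrow> nat \<Rightarrow> nat set set" where
  "k_subsets n k = {I. I \<subseteq> {..<n} \<and> card I = k}"

definition subset_average :: "nat \<Rightarrow> nat \<Rightarrow> (nat set \<Rightarrow> real) \<Rightarrow> real" where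
  "subset_average n k g = (\<Sum>I\<in>k_subsets n k. g I) / real (n choose k)"

lemma finite_k_subsets: "finite (k_subsets n k)"
  unfolding k_subsets_def by (rule finite_subset[of _ "Pow {..<n}"]) auto

lemma k_risk_eq_subset_average:
  "k_risk l f n Z k =
     subset_average n k (\<lambda>I. l (emp_mean I (\<lambda>i. f (fst (Z i)))) (emp_mean I (\<lambda>i. snd (Z i))))"
  by (simp add: k_risk_def subset_average_def k_subsets_def)

lemma sum_k_subsets_remove_one:
  "(\<Sum>J\<in>k_subsets n (Suc k). \<Sum>j\<in>J. h (J - {j})) = real (n - k) * (\<Sum>I\<in>k_subsets n k. h I)"
proof -
  have "(\<Sum>J\<in>k_subsets n (Suc k). \<Sum>j\<in>J. h (J - {j}))
      = (\<Sum>(J, j)\<in>Sigma (k_subsets n (Suc k)) (\<lambda>J. J). h (J - {j}))"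
    using finite_k_subsets by (subst sum.Sigma) (auto simp: k_subsets_def dest: finite_subset)
  also have "\<dots> = (\<Sum>(I, j)\<in>Sigma (k_subsets n k) (\<lambda>I. {..<n} - I). h I)"
    by (rule sum.reindex_bij_witness[where i = "\<lambda>(I, j). (insert j I, j)"
          and j = "\<lambda>(J, j). (J - {j}, j)"])
       (auto simp: k_subsets_def card_Diff_singleton insert_absorb card_insert_disjoint
             dest: finite_subset)
  also have "\<dots> = (\<Sum>I\<in>k_subsets n k. real (n - k) * h I)"
    using finite_k_subsets
    by (subst sum.Sigma[symmetric])
       (auto simp: k_subsets_def card_Diff_subset finite_subset intro!: sum.cong)
  finally show ?thesis by (simp add: sum_distrib_left)
qed

lemma Suc_times_binomial_Suc: "Suc k * (n choose Suc k) = (n - k) * (n choose k)"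
  by (metis binomial_absorption binomial_absorb_comp)

lemma subset_average_Suc_le:
  assumes "Suc k \<le> n"
    and jensen: "\<And>J. J \<in> k_subsets n (Suc k) \<Longrightarrow> g J \<le> (\<Sum>j\<in>J. g (J - {j})) / real (Suc k)"
  shows "subset_average n (Suc k) g \<le> subset_average n k g"
proof -
  define S0 where "S0 = (\<Sum>I\<in>k_subsets n k. g I)"
  define S1 where "S1 = (\<Sum>J\<in>k_subsets n (Suc k). g J)"
  have "S1 \<le> (\<Sum>J\<in>k_subsets n (Suc k). (\<Sum>j\<in>J. g (J - {j})) / real (Suc k))"
    unfolding S1_def by (rule sum_mono) (rule jensen)
  also have "\<dots> = real (n - k) * S0 / real (Suc k)"
    by (simp add: S0_def sum_divide_distrib[symmetric] sum_k_subsets_remove_one)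
  finally have S1_le: "real (Suc k) * S1 \<le> real (n - k) * S0"
    by (simp add: field_simps)
  have binom: "real (Suc k) * real (n choose Suc k) = real (n - k) * real (n choose k)"
    using Suc_times_binomial_Suc[of k n] by (metis of_nat_mult)
  have pos: "0 < real (n choose k)" "0 < real (n choose Suc k)" "0 < real (n - k)"
    using assms(1) by auto
  have "S1 * real (n choose k) * real (n - k) = S1 * (real (Suc k) * real (n choose Suc k))"
    unfolding binom by (simp only: ac_simps)
  also have "\<dots> = real (Suc k) * S1 * real (n choose Suc k)"
    by (simp only: ac_simps)
  also have "\<dots> \<le> real (n - k) * S0 * real (n choose Suc k)"
    using S1_le pos by (intro mult_right_mono) auto
  also have "\<dots> = S0 * real (n choose Suc k) * real (n - k)"
    by (simp only: ac_simps)
  finally have "S1 * real (n choose k) \<le> S0 * real (n choose Suc k)"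
    using pos(3) by (simp only: mult_le_cancel_right_pos)
  then show ?thesis
    using pos by (simp add: subset_average_def S0_def[symmetric] S1_def[symmetric] divide_simps)
qed

lemma subset_average_antimono:
  assumes "k \<le> k'" "k' \<le> n"
    and jensen: "\<And>m J. k \<le> m \<Longrightarrow> Suc m \<le> n \<Longrightarrow> J \<in> k_subsets n (Suc m) \<Longrightarrow>
                  g J \<le> (\<Sum>j\<in>J. g (J - {j})) / real (Suc m)"
  shows "subset_average n k' g \<le> subset_average n k g"
  using assms(1,2)
proof (induction k' rule: dec_induct)
  case base
  show ?case by simp
next
  case (step m)
  have "subset_average n (Suc m) g \<le> subset_average n m g"
    using step.hyps step.prems by (intro subset_average_Suc_le jensen) auto
  with step show ?case by simp
qed

lemma emp_mean_in_convex:
  assumes "finite I" "I \<noteq> {}" "convex S" "\<And>i. i \<in> I \<Longrightarrow> g i \<in> S"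
  shows "emp_mean I g \<in> S"
proof -
  have "(\<Sum>i\<in>I. (1 / real (card I)) *\<^sub>R g i) \<in> S"
    using assms by (intro convex_sum) auto
  then show ?thesis by (simp add: emp_mean_def sum_divide_distrib)
qed

lemma emp_mean_remove_one:
  assumes "finite J" "card J = Suc k" "1 \<le> k"
  shows "emp_mean J g = (\<Sum>j\<in>J. emp_mean (J - {j}) g) / real (Suc k)"
proof -
  have "(\<Sum>j\<in>J. emp_mean (J - {j}) g) = (\<Sum>j\<in>J. (sum g J - g j) / real k)"
    using assms by (intro sum.cong) (simp_all add: emp_mean_def sum_diff1 card_Diff_singleton)
  also have "\<dots> = (real (card J) * sum g J - sum g J) / real k"
    by (simp add: sum_divide_distrib[symmetric] sum_subtractf)
  also have "\<dots> = sum g J"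
    using assms by (simp add: field_simps)
  finally show ?thesis
    using assms by (simp add: emp_mean_def)
qed

lemma convex_on_emp_mean_remove_one:
  fixes l :: "real \<times> real \<Rightarrow> real"
  assumes cvx: "convex_on C l"
    and means: "\<And>I. I \<subseteq> J \<Longrightarrow> I \<noteq> {} \<Longrightarrow> (emp_mean I F, emp_mean I Y) \<in> C"
    and J: "finite J" "card J = Suc k" and "1 \<le> k"
  shows "l (emp_mean J F, emp_mean J Y)
           \<le> (\<Sum>j\<in>J. l (emp_mean (J - {j}) F, emp_mean (J - {j}) Y)) / real (Suc k)"
proof -
  have "(emp_mean J F, emp_mean J Y)
      = (\<Sum>j\<in>J. (1 / real (Suc k)) *\<^sub>R (emp_mean (J - {j}) F, emp_mean (J - {j}) Y))"
    using emp_mean_remove_one[OF J \<open>1 \<le> k\<close>]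
    by (simp add: prod_eq_iff fst_sum snd_sum sum_divide_distrib)
  also have "l \<dots> \<le> (\<Sum>j\<in>J. (1 / real (Suc k)) * l (emp_mean (J - {j}) F, emp_mean (J - {j}) Y))"
  proof (rule convex_on_sum[OF \<open>finite J\<close> _ cvx])
    show "J \<noteq> {}" "(\<Sum>j\<in>J. 1 / real (Suc k)) = 1"
      using J by auto
    fix j assume "j \<in> J"
    then have "J - {j} \<noteq> {}"
      using J \<open>1 \<le> k\<close> by (metis card_Diff_singleton card.empty diff_Suc_1 not_one_le_zero)
    then show "(emp_mean (J - {j}) F, emp_mean (J - {j}) Y) \<in> C"
      by (intro means) auto
  qed simp
  finally show ?thesis
    by (simp add: sum_divide_distrib)
qed

lemma subset_average_convex_loss_antimono:
  fixes l :: "real \<times> real \<Rightarrow> real"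
  assumes cvx: "convex_on C l"
    and means: "\<And>I. I \<subseteq> {..<n} \<Longrightarrow> I \<noteq> {} \<Longrightarrow> (emp_mean I F, emp_mean I Y) \<in> C"
    and "1 \<le> k" "k \<le> k'" "k' \<le> n"
  shows "subset_average n k' (\<lambda>I. l (emp_mean I F, emp_mean I Y))
           \<le> subset_average n k (\<lambda>I. l (emp_mean I F, emp_mean I Y))"
proof (rule subset_average_antimono)
  fix m J assume "k \<le> m" "J \<in> k_subsets n (Suc m)"
  then show "l (emp_mean J F, emp_mean J Y)
               \<le> (\<Sum>j\<in>J. l (emp_mean (J - {j}) F, emp_mean (J - {j}) Y)) / real (Suc m)"
    using assms(3) by (intro convex_on_emp_mean_remove_one[OF cvx means])
                      (auto simp: k_subsets_def dest: finite_subset)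
qed (use assms in auto)

definition rel_entr :: "real \<Rightarrow> real \<Rightarrow> real" where
  "rel_entr a b = (if a = 0 then 0 else a * ln (a / b))"

lemma kl_eq_rel_entr: "kl yh y = rel_entr y yh + rel_entr (1 - y) (1 - yh)"
  by (simp add: kl_def rel_entr_def)

lemma rel_entr_ge_tangent:
  assumes "0 \<le> a" "0 < b" "0 < c"
  shows "a * ln c + a - b * c \<le> rel_entr a b"
proof (cases "a = 0")
  case False
  with assms have a: "0 < a" by simp
  have "ln (b * c / a) \<le> b * c / a - 1"
    using a assms by (intro ln_le_minus_one) simp
  moreover have "ln (a / b) = ln c - ln (b * c / a)"
    using a assms by (simp add: ln_div ln_mult)
  ultimately have "a * (ln c + 1 - b * c / a) \<le> a * ln (a / b)"
    using a by (intro mult_left_mono) auto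
  then show ?thesis
    using a False by (simp add: rel_entr_def algebra_simps)
qed (use assms in \<open>simp add: rel_entr_def\<close>)

text \<open>Take the tangent planes at both points with the common slope c = A / B of the combination
  (A, B): their convex combination is affine in (a, b) and touches rel_entr at (A, B).\<close>

lemma rel_entr_convex_combination:
  assumes t: "0 < t" "t < 1" and ab: "0 \<le> a1" "0 \<le> a2" "0 < b1" "0 < b2"
  shows "rel_entr ((1 - t) * a1 + t * a2) ((1 - t) * b1 + t * b2)
           \<le> (1 - t) * rel_entr a1 b1 + t * rel_entr a2 b2"
proof -
  define A where "A = (1 - t) * a1 + t * a2"
  define B where "B = (1 - t) * b1 + t * b2"
  have "0 \<le> A" "0 < B"
    using t ab by (simp_all add: A_def B_def add_pos_pos)
  have "rel_entr A B \<le> (1 - t) * rel_entr a1 b1 + t * rel_entr a2 b2"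
  proof (cases "A = 0")
    case True
    then have "a1 = 0" "a2 = 0"
      using t ab unfolding A_def by (smt (verit) mult_pos_pos mult_nonneg_nonneg)+
    then show ?thesis
      using True by (simp add: rel_entr_def)
  next
    case False
    define c where "c = A / B"
    have "0 < c"
      using False \<open>0 \<le> A\<close> \<open>0 < B\<close> by (simp add: c_def)
    have "rel_entr A B = A * ln c + A - B * c"
      using False \<open>0 < B\<close> by (simp add: rel_entr_def c_def)
    also have "\<dots> = (1 - t) * (a1 * ln c + a1 - b1 * c) + t * (a2 * ln c + a2 - b2 * c)"
      by (simp add: A_def B_def algebra_simps)
    also have "\<dots> \<le> (1 - t) * rel_entr a1 b1 + t * rel_entr a2 b2"
      using t ab \<open>0 < c\<close> by (intro add_mono mult_left_mono rel_entr_ge_tangent) auto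
    finally show ?thesis .
  qed
  then show ?thesis
    by (simp add: A_def B_def)
qed

lemma convex_on_rel_entr: "convex_on ({0..} \<times> {0<..}) (\<lambda>p. rel_entr (fst p) (snd p))"
proof (rule convex_onI)
  show "convex ({0..} \<times> {0<..} :: (real \<times> real) set)"
    by (intro convex_Times) auto
  fix t :: real and x y :: "real \<times> real"
  assume "0 < t" "t < 1" "x \<in> {0..} \<times> {0<..}" "y \<in> {0..} \<times> {0<..}"
  then show "rel_entr (fst ((1 - t) *\<^sub>R x + t *\<^sub>R y)) (snd ((1 - t) *\<^sub>R x + t *\<^sub>R y))
               \<le> (1 - t) * rel_entr (fst x) (snd x) + t * rel_entr (fst y) (snd y)"
    by (cases x, cases y) (simp add: rel_entr_convex_combination)
qed

lemma convex_on_compose_affine: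
  assumes "convex_on T f" "convex S" "A ` S \<subseteq> T"
    and affine: "\<And>t x y. A ((1 - t) *\<^sub>R x + t *\<^sub>R y) = (1 - t) *\<^sub>R A x + t *\<^sub>R A y"
  shows "convex_on S (\<lambda>x. f (A x))"
  using assms by (intro convex_onI) (auto simp: affine intro!: convex_onD)

lemma convex_on_kl: "convex_on ({0<..<1} \<times> {0..1}) (\<lambda>p. kl (fst p) (snd p))"
proof -
  have cvx: "convex ({0<..<1::real} \<times> {0..1::real})"
    by (intro convex_Times) auto
  have "convex_on ({0<..<1} \<times> {0..1}) (\<lambda>p. rel_entr (fst (snd p, fst p)) (snd (snd p, fst p)))"
    using cvx by (intro convex_on_compose_affine[OF convex_on_rel_entr]) auto
  moreover have "convex_on ({0<..<1} \<times> {0..1})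
      (\<lambda>p. rel_entr (fst (1 - snd p, 1 - fst p)) (snd (1 - snd p, 1 - fst p)))"
    using cvx by (intro convex_on_compose_affine[OF convex_on_rel_entr])
                 (auto simp: algebra_simps)
  ultimately show ?thesis
    by (simp add: kl_eq_rel_entr convex_on_add)
qed

theorem mainTheorem6:
  fixes f :: "'x \<Rightarrow> real" and Z :: "nat \<Rightarrow> 'x \<times> real" and n k k' :: nat
  assumes "1 \<le> k" and "k \<le> k'" and "k' \<le> n"
  shows "(\<forall>l :: real \<Rightarrow> real \<Rightarrow> real. convex_on UNIV (\<lambda>p. l (fst p) (snd p)) \<longrightarrow>
            k_risk l f n Z k' \<le> k_risk l f n Z k)
       \<and> ((\<forall>x. 0 < f x \<and> f x < 1) \<and> (\<forall>i<n. 0 \<le> snd (Z i) \<and> snd (Z i) \<le> 1) \<longrightarrow>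
            k_risk kl f n Z k' \<le> k_risk kl f n Z k)"
proof (intro conjI allI impI)
  fix l :: "real \<Rightarrow> real \<Rightarrow> real"
  assume "convex_on UNIV (\<lambda>p. l (fst p) (snd p))"
  from subset_average_convex_loss_antimono[OF this _ assms]
  show "k_risk l f n Z k' \<le> k_risk l f n Z k"
    by (simp add: k_risk_eq_subset_average)
next
  assume range: "(\<forall>x. 0 < f x \<and> f x < 1) \<and> (\<forall>i<n. 0 \<le> snd (Z i) \<and> snd (Z i) \<le> 1)"
  have "(emp_mean I (\<lambda>i. f (fst (Z i))), emp_mean I (\<lambda>i. snd (Z i))) \<in> {0<..<1} \<times> {0..1}"
    if "I \<subseteq> {..<n}" "I \<noteq> {}" for I
    using that range finite_subset[OF that(1)]
    unfolding mem_Times_iff fst_conv snd_conv by (intro conjI emp_mean_in_convex) auto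
  from subset_average_convex_loss_antimono[OF convex_on_kl this assms]
  show "k_risk kl f n Z k' \<le> k_risk kl f n Z k"
    by (simp add: k_risk_eq_subset_average)
qed

end
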